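(* Let $n\le l$ be positive integers, let $L_l=\{a_1<\dots<a_l\}$ be the linearly ordered semilattice of $l$ elements, and let $t(X)=s(X)$ be an equation over $L_l$ in the variables $X=\{x_1,\dots,x_n\}$ in which every variable occurs. If $\sigma\ne\sigma'$ are two distinct permutations of $\{1,\dots,n\}$, each of the first or second kind with respect to $t(X)=s(X)$, then $Y_\sigma\not\subseteq Y_{\sigma'}$.
   Context: $L_l$ has multiplication $a_ia_j=a_{\min(i,j)}$. A term is a commutative word in $x_1,\dots,x_n$; $\mathrm{Var}(t)$ is the set of variables occurring in $t$. An equation is an ordered pair of terms $t(X)=s(X)$; $P\in L_l^n$ is a solution if $t(P)=s(P)$; $x\le y$ abbreviates $xy=x$. For a system $S$, $V(S)\subseteq L_l^n$ is its set of common solutions. A permutation $\sigma$ of $\{1,\dots,n\}$ is of the first kind if $x_{\sigma(1)}\in\mathrm{Var}(t)\cap\mathrm{Var}(s)$, and of the second kind if $x_{\sigma(1)}\in\mathrm{Var}(s)\setminus\mathrm{Var}(t)$ and $x_{\sigma(2)}\in\mathrm{Var}(t)\setminus\mathrm{Var}(s)$. For $\sigma$ of the first kind, $Y_\sigma=V(\{x_{\sigma(i)}\le x_{\sigma(i+1)}:1\le i\le n-1\})$; for $\sigma$ of the second kind, $Y_\sigma=V(\{x_{\sigma(1)}=x_{\sigma(2)}\}\cup\{x_{\sigma(i)}\le x_{\sigma(i+1)}:2\le i\le n-1\})$. *)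

theory Defs
  imports Main "HOL-Library.Multiset" "HOL-Library.FuncSet" "HOL-Combinatorics.Permutations"
begin

text \<open>The linearly ordered semilattice L_l = {a_1 < ... < a_l} is modelled by the
  indices {1..l}, with a_i identified with i; multiplication a_i a_j = a_(min i j).\<close>

definition Ll :: "nat \<Rightarrow> nat set" where
  "Ll l = {1..l}"

definition Lmult :: "nat \<Rightarrow> nat \<Rightarrow> nat" where
  "Lmult a b = min a b"

definition Lleq :: "nat \<Rightarrow> nat \<Rightarrow> bool" where
  "Lleq a b \<longleftrightarrow> Lmult a b = a"

text \<open>A term is a (nonempty) commutative word in x_1..x_n, i.e. a multiset of variable
  indices; Var(t) is its support.\<close>
definition is_term :: "nat \<Rightarrow> nat multiset \<Rightarrow> bool" where
  "is_term n t \<longleftrightarrow> t \<noteq> {#} \<and> set_mset t \<subseteq> {1..n}"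

definition Var :: "nat multiset \<Rightarrow> nat set" where
  "Var t = set_mset t"

definition Lpow :: "nat \<Rightarrow> nat \<Rightarrow> (nat \<Rightarrow> nat) set" where
  "Lpow l n = {1..n} \<rightarrow>\<^sub>E Ll l"

definition first_kind :: "nat multiset \<Rightarrow> nat multiset \<Rightarrow> (nat \<Rightarrow> nat) \<Rightarrow> bool" where
  "first_kind t s \<sigma> \<longleftrightarrow> \<sigma> 1 \<in> Var t \<inter> Var s"

definition second_kind :: "nat multiset \<Rightarrow> nat multiset \<Rightarrow> (nat \<Rightarrow> nat) \<Rightarrow> bool" where
  "second_kind t s \<sigma> \<longleftrightarrow> \<sigma> 1 \<in> Var s - Var t \<and> \<sigma> 2 \<in> Var t - Var s"

definition Y1 :: "nat \<Rightarrow> nat \<Rightarrow> (nat \<Rightarrow> nat) \<Rightarrow> (nat \<Rightarrow> nat) set" where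
  "Y1 l n \<sigma> = {P \<in> Lpow l n. \<forall>i. 1 \<le> i \<and> i \<le> n - 1 \<longrightarrow> Lleq (P (\<sigma> i)) (P (\<sigma> (i + 1)))}"

definition Y2 :: "nat \<Rightarrow> nat \<Rightarrow> (nat \<Rightarrow> nat) \<Rightarrow> (nat \<Rightarrow> nat) set" where
  "Y2 l n \<sigma> = {P \<in> Lpow l n. P (\<sigma> 1) = P (\<sigma> 2) \<and>
      (\<forall>i. 2 \<le> i \<and> i \<le> n - 1 \<longrightarrow> Lleq (P (\<sigma> i)) (P (\<sigma> (i + 1))))}"

text \<open>Y_sigma with respect to the equation t = s (the two kinds are disjoint).\<close>
definition Ysig :: "nat \<Rightarrow> nat \<Rightarrow> nat multiset \<Rightarrow> nat multiset \<Rightarrow> (nat \<Rightarrow> nat) \<Rightarrow> (nat \<Rightarrow> nat) set" where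
  "Ysig l n t s \<sigma> = (if first_kind t s \<sigma> then Y1 l n \<sigma> else Y2 l n \<sigma>)"

end

theory Submission
  imports Defs
begin

text \<open>For \<sigma> of the first kind, the point with x_\<sigma>(i) = a_i lies in Y_\<sigma>; for \<sigma> of the
  second kind, so does the point with x_\<sigma>(1) = x_\<sigma>(2) = a_1 and x_\<sigma>(i) = a_(i-1) for i \<ge> 2.
  Read along another permutation \<sigma>', such a point becomes the level profile composed with
  \<sigma>^(-1) \<sigma>', so its membership in Y_\<sigma>' forces \<sigma>^(-1) \<sigma>' to be monotone, hence the identity,
  unless \<sigma>'(1) \<in> {\<sigma>(1), \<sigma>(2)}. The kinds exclude the latter, because Var t \<inter> Var s,
  Var s - Var t and Var t - Var s are pairwise disjoint.\<close>

lemma Lleq_iff_le: "Lleq a b \<longleftrightarrow> a \<le> b"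
  unfolding Lleq_def Lmult_def by auto

lemma mono_on_atLeastAtMost_iff_Suc:
  fixes f :: "nat \<Rightarrow> 'a::order"
  shows "mono_on {m..n} f \<longleftrightarrow> (\<forall>i. m \<le> i \<longrightarrow> i < n \<longrightarrow> f i \<le> f (Suc i))"
proof (intro iffI allI impI)
  fix i assume mono: "mono_on {m..n} f" and "m \<le> i" "i < n"
  show "f i \<le> f (Suc i)"
  proof (rule mono_onD[OF mono])
    show "i \<in> {m..n}" "Suc i \<in> {m..n}"
      using \<open>m \<le> i\<close> \<open>i < n\<close> by simp_all
  qed simp
next
  assume step: "\<forall>i. m \<le> i \<longrightarrow> i < n \<longrightarrow> f i \<le> f (Suc i)"
  show "mono_on {m..n} f"
  proof (rule mono_onI)
    fix r s assume "r \<in> {m..n}" "s \<in> {m..n}" "r \<le> s"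
    show "f r \<le> f s"
    proof (rule lift_Suc_mono_le_ivl[where N = "{m..<n}"])
      show "f i \<le> f (Suc i)" if "i \<in> {m..<n}" for i
        using step that by simp
      show "{r..<s} \<subseteq> {m..<n}"
        using \<open>r \<in> {m..n}\<close> \<open>s \<in> {m..n}\<close> by auto
    qed fact
  qed
qed

lemma Y1_eq: "Y1 l n \<sigma> = {P \<in> Lpow l n. mono_on {1..n} (P \<circ> \<sigma>)}"
  unfolding Y1_def mono_on_atLeastAtMost_iff_Suc Lleq_iff_le
  by (auto simp: less_diff_conv)

lemma Y2_eq: "Y2 l n \<sigma> = {P \<in> Lpow l n. P (\<sigma> 1) = P (\<sigma> 2) \<and> mono_on {2..n} (P \<circ> \<sigma>)}"
  unfolding Y2_def mono_on_atLeastAtMost_iff_Suc Lleq_iff_le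
  by (auto simp: less_diff_conv)

lemma permutes_mono_on_eq_id:
  fixes g :: "'a::linorder \<Rightarrow> 'a"
  assumes perm: "g permutes S" and "finite S" and mono: "mono_on S g"
  shows "g = id"
proof
  fix x
  define xs where "xs = sorted_list_of_set S"
  have "map g xs = xs"
  proof (rule sorted_distinct_set_unique)
    show "sorted (map g xs)"
      using mono \<open>finite S\<close> by (intro sorted_map_mono) (simp_all add: xs_def)
    show "distinct (map g xs)"
      using permutes_inj_on[OF perm] \<open>finite S\<close> by (simp add: xs_def distinct_map)
    show "set (map g xs) = set xs"
      using permutes_image[OF perm] \<open>finite S\<close> by (simp add: xs_def)
  qed (simp_all add: xs_def)
  then have "\<forall>y \<in> set xs. g y = y"
    by (metis list.map_id map_eq_conv id_apply)
  then have "\<forall>y \<in> S. g y = y"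
    using \<open>finite S\<close> by (simp add: xs_def)
  then show "g x = id x"
    using permutes_not_in[OF perm] by (cases "x \<in> S") auto
qed

lemma inv_comp_eq_id_imp_eq:
  assumes "\<sigma> permutes S" and "inv \<sigma> \<circ> \<sigma>' = id"
  shows "\<sigma> = \<sigma>'"
proof -
  have "\<sigma>' = (\<sigma> \<circ> inv \<sigma>) \<circ> \<sigma>'"
    by (simp add: permutes_inv_o(1)[OF assms(1)])
  also have "\<dots> = \<sigma> \<circ> (inv \<sigma> \<circ> \<sigma>')"
    by (rule comp_assoc)
  finally show ?thesis
    by (simp add: assms(2))
qed

lemma permutes_comp_inv_apply:
  assumes "\<sigma> permutes S"
  shows "\<sigma> ((inv \<sigma> \<circ> \<sigma>') i) = \<sigma>' i"
  using permutes_inverses(1)[OF assms] by simp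

definition perm_point :: "nat \<Rightarrow> (nat \<Rightarrow> nat) \<Rightarrow> (nat \<Rightarrow> nat) \<Rightarrow> nat \<Rightarrow> nat" where
  "perm_point n \<sigma> h = restrict (h \<circ> inv \<sigma>) {1..n}"

lemma perm_point_apply:
  assumes "\<sigma> permutes {1..n}" and "i \<in> {1..n}"
  shows "perm_point n \<sigma> h (\<sigma> i) = h i"
proof -
  have "\<sigma> i \<in> {1..n}"
    using assms permutes_in_image by metis
  then show ?thesis
    by (simp add: perm_point_def permutes_inverses(2)[OF assms(1)] del: atLeastAtMost_iff)
qed

lemma perm_point_apply_other:
  assumes "\<sigma> permutes {1..n}" and "\<sigma>' permutes {1..n}" and "i \<in> {1..n}"
  shows "perm_point n \<sigma> h (\<sigma>' i) = h ((inv \<sigma> \<circ> \<sigma>') i)"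
proof -
  have "(inv \<sigma> \<circ> \<sigma>') i \<in> {1..n}"
    using assms(3) permutes_compose[OF assms(2) permutes_inv[OF assms(1)]] permutes_in_image
    by metis
  then show ?thesis
    using perm_point_apply[OF assms(1)] permutes_comp_inv_apply[OF assms(1)] by metis
qed

lemma perm_point_in_Lpow:
  assumes "\<sigma> permutes {1..n}" and "h ` {1..n} \<subseteq> {1..l}"
  shows "perm_point n \<sigma> h \<in> Lpow l n"
  using assms permutes_in_image[OF permutes_inv[OF assms(1)]]
  by (auto simp: perm_point_def Lpow_def Ll_def)

lemma mono_on_perm_point_comp_iff:
  assumes "\<sigma> permutes {1..n}" and "\<sigma>' permutes {1..n}" and "S \<subseteq> {1..n}"
  shows "mono_on S (perm_point n \<sigma> h \<circ> \<sigma>') \<longleftrightarrow> mono_on S (h \<circ> (inv \<sigma> \<circ> \<sigma>'))"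
  using assms perm_point_apply_other[OF assms(1,2)] by (auto simp: mono_on_def subset_iff)

lemma id_point_in_Y1:
  assumes "\<sigma> permutes {1..n}" and "n \<le> l"
  shows "perm_point n \<sigma> id \<in> Y1 l n \<sigma>"
  using assms perm_point_in_Lpow[OF assms(1), of id l]
    mono_on_perm_point_comp_iff[OF assms(1) assms(1) order_refl, of id]
  by (auto simp: Y1_eq permutes_inv_o(2) mono_on_id)

lemma id_point_in_Y1D:
  assumes "\<sigma> permutes {1..n}" and "\<sigma>' permutes {1..n}"
    and "perm_point n \<sigma> id \<in> Y1 l n \<sigma>'"
  shows "\<sigma> = \<sigma>'"
proof -
  have "mono_on {1..n} (inv \<sigma> \<circ> \<sigma>')"
    using assms(3) mono_on_perm_point_comp_iff[OF assms(1,2) order_refl, of id]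
    by (simp add: Y1_eq)
  then have "inv \<sigma> \<circ> \<sigma>' = id"
    by (intro permutes_mono_on_eq_id[of _ "{1..n}"] permutes_compose assms permutes_inv) simp_all
  then show ?thesis
    by (rule inv_comp_eq_id_imp_eq[OF assms(1)])
qed

lemma id_point_notin_Y2:
  assumes "\<sigma> permutes {1..n}" and "\<sigma>' permutes {1..n}" and "2 \<le> n"
  shows "perm_point n \<sigma> id \<notin> Y2 l n \<sigma>'"
proof
  assume "perm_point n \<sigma> id \<in> Y2 l n \<sigma>'"
  then have eq: "(inv \<sigma> \<circ> \<sigma>') 1 = (inv \<sigma> \<circ> \<sigma>') 2"
    using assms perm_point_apply_other[OF assms(1,2)] by (simp add: Y2_eq)
  have inj: "inj (inv \<sigma> \<circ> \<sigma>')"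
    using assms by (intro permutes_inj permutes_compose permutes_inv)
  show False
    using injD[OF inj eq] by simp
qed

definition merge_first_two :: "nat \<Rightarrow> nat" where
  "merge_first_two i = max 1 (i - 1)"

lemma merge_point_in_Y2:
  assumes "\<sigma> permutes {1..n}" and "2 \<le> n" and "n \<le> l"
  shows "perm_point n \<sigma> merge_first_two \<in> Y2 l n \<sigma>"
proof -
  have "mono_on {2..n} merge_first_two"
    by (auto intro!: mono_onI simp: merge_first_two_def)
  then have "mono_on {2..n} (perm_point n \<sigma> merge_first_two \<circ> \<sigma>)"
    using mono_on_perm_point_comp_iff[OF assms(1) assms(1), of "{2..n}"]
    by (simp add: permutes_inv_o(2)[OF assms(1)])
  moreover have "perm_point n \<sigma> merge_first_two (\<sigma> 1) = perm_point n \<sigma> merge_first_two (\<sigma> 2)"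
    using assms(2) by (simp add: perm_point_apply[OF assms(1)] merge_first_two_def)
  moreover have "perm_point n \<sigma> merge_first_two \<in> Lpow l n"
    using assms by (intro perm_point_in_Lpow) (auto simp: merge_first_two_def)
  ultimately show ?thesis
    by (simp add: Y2_eq)
qed

lemma merge_point_in_Y1D:
  assumes "\<sigma> permutes {1..n}" and "\<sigma>' permutes {1..n}" and "1 \<le> n"
    and "perm_point n \<sigma> merge_first_two \<in> Y1 l n \<sigma>'"
  shows "\<sigma>' 1 = \<sigma> 1 \<or> \<sigma>' 1 = \<sigma> 2"
proof -
  define g where "g = inv \<sigma> \<circ> \<sigma>'"
  have g: "g permutes {1..n}"
    unfolding g_def using assms(1,2) by (intro permutes_compose permutes_inv)
  have mono: "mono_on {1..n} (merge_first_two \<circ> g)"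
    using assms(4) mono_on_perm_point_comp_iff[OF assms(1,2) order_refl]
    by (simp add: Y1_eq g_def)
  obtain j where j: "j \<in> {1..n}" "g j = 1"
    using assms(3) permutes_image[OF g] by (metis atLeastAtMost_iff imageE order_refl)
  have "merge_first_two (g 1) \<le> merge_first_two (g j)"
    using mono_onD[OF mono, of 1 j] j assms(3) by simp
  moreover have "g 1 \<in> {1..n}"
    using assms(3) permutes_in_image[OF g] by simp
  ultimately have "g 1 = 1 \<or> g 1 = 2"
    using j by (auto simp: merge_first_two_def)
  then show ?thesis
    using permutes_comp_inv_apply[OF assms(1), of \<sigma>' 1] by (auto simp: g_def)
qed

lemma merge_point_in_Y2D:
  assumes "\<sigma> permutes {1..n}" and "\<sigma>' permutes {1..n}" and "2 \<le> n"
    and "perm_point n \<sigma> merge_first_two \<in> Y2 l n \<sigma>'"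
  shows "\<sigma>' 1 = \<sigma> 2 \<or> \<sigma> = \<sigma>'"
proof -
  define g where "g = inv \<sigma> \<circ> \<sigma>'"
  have g: "g permutes {1..n}"
    unfolding g_def using assms(1,2) by (intro permutes_compose permutes_inv)
  have g_range: "g i \<in> {1..n}" if "i \<in> {1..n}" for i
    using that permutes_in_image[OF g] by blast
  have g_inj: "g i = g j \<longleftrightarrow> i = j" for i j
    using permutes_inj[OF g] by (auto dest: injD)
  have merge12: "merge_first_two (g 1) = merge_first_two (g 2)"
    using assms(3,4) perm_point_apply_other[OF assms(1,2), of _ merge_first_two]
    by (simp add: Y2_eq g_def)
  have mono2: "mono_on {2..n} (merge_first_two \<circ> g)"
    using assms(4) mono_on_perm_point_comp_iff[OF assms(1,2), of "{2..n}" merge_first_two]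
    by (simp add: Y2_eq g_def)
  have "g 1 \<noteq> g 2" "1 \<le> g 1" "1 \<le> g 2"
    using g_inj[of 1 2] g_range[of 1] g_range[of 2] assms(3) by simp_all
  then have "g 1 = 1 \<or> g 1 = 2"
    using merge12 unfolding merge_first_two_def by linarith
  moreover have "g = id" if g1: "g 1 = 1"
  proof (rule permutes_mono_on_eq_id[OF g])
    have ge2: "2 \<le> g i" if "i \<in> {2..n}" for i
      using that g_range[of i] g_inj[of i 1] g1 by simp
    have "mono_on {2..n} g"
    proof (rule mono_onI)
      fix r s assume r: "r \<in> {2..n}" and s: "s \<in> {2..n}" and "r \<le> s"
      then have "merge_first_two (g r) \<le> merge_first_two (g s)"
        using mono_onD[OF mono2] by simp
      then show "g r \<le> g s"
        using ge2[OF r] ge2[OF s] unfolding merge_first_two_def by linarith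
    qed
    then show "mono_on {1..n} g"
    proof (intro mono_onI)
      fix r s assume "mono_on {2..n} g" "r \<in> {1..n}" "s \<in> {1..n}" "r \<le> s"
      then show "g r \<le> g s"
        using g1 g_range[of s] mono_onD[of "{2..n}" g r s] by (cases "r = 1") auto
    qed
  qed simp
  ultimately show ?thesis
    using permutes_comp_inv_apply[OF assms(1), of \<sigma>' 1] inv_comp_eq_id_imp_eq[OF assms(1)]
    by (auto simp: g_def)
qed

lemma second_kind_not_first_kind: "second_kind t s \<sigma> \<Longrightarrow> \<not> first_kind t s \<sigma>"
  by (auto simp: first_kind_def second_kind_def)

lemma second_kind_two_le:
  assumes "\<sigma> permutes {1..n}" and "Var t \<subseteq> {1..n}" and "second_kind t s \<sigma>"
  shows "2 \<le> n"
proof -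
  have "\<sigma> 2 \<in> {1..n}"
    using assms(2,3) by (auto simp: second_kind_def)
  then show ?thesis
    using permutes_in_image[OF assms(1)] by fastforce
qed

theorem lemma3:
  fixes n l :: nat and t s :: "nat multiset" and \<sigma> \<sigma>' :: "nat \<Rightarrow> nat"
  assumes "1 \<le> n" and "n \<le> l"
    and "is_term n t" and "is_term n s"
    and "Var t \<union> Var s = {1..n}"
    and "\<sigma> permutes {1..n}" and "\<sigma>' permutes {1..n}"
    and "first_kind t s \<sigma> \<or> second_kind t s \<sigma>"
    and "first_kind t s \<sigma>' \<or> second_kind t s \<sigma>'"
    and "\<sigma> \<noteq> \<sigma>'"
  shows "\<not> Ysig l n t s \<sigma> \<subseteq> Ysig l n t s \<sigma>'"
proof -
  have Var_t: "Var t \<subseteq> {1..n}"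
    using assms(5) by blast
  have Ysig_second: "Ysig l n t s \<tau> = Y2 l n \<tau>" if "second_kind t s \<tau>" for \<tau>
    using second_kind_not_first_kind[OF that] by (simp add: Ysig_def)
  show ?thesis
  proof (cases "first_kind t s \<sigma>")
    case True
    then have "perm_point n \<sigma> id \<in> Ysig l n t s \<sigma>"
      using id_point_in_Y1[OF assms(6,2)] by (simp add: Ysig_def)
    moreover have "perm_point n \<sigma> id \<notin> Ysig l n t s \<sigma>'"
      using assms(9,10) id_point_in_Y1D[OF assms(6,7), of l]
        id_point_notin_Y2[OF assms(6,7) second_kind_two_le[OF assms(7) Var_t]]
      by (auto simp: Ysig_def Ysig_second)
    ultimately show ?thesis
      by blast
  next
    case False
    then have kind: "second_kind t s \<sigma>"
      using assms(8) by blast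
    have two: "2 \<le> n"
      by (rule second_kind_two_le[OF assms(6) Var_t kind])
    have "perm_point n \<sigma> merge_first_two \<in> Ysig l n t s \<sigma>"
      using merge_point_in_Y2[OF assms(6) two assms(2)] by (simp add: Ysig_second[OF kind])
    moreover have "perm_point n \<sigma> merge_first_two \<notin> Ysig l n t s \<sigma>'"
      using assms(9,10) kind merge_point_in_Y1D[OF assms(6,7,1), of l]
        merge_point_in_Y2D[OF assms(6,7) two, of l]
      by (auto simp: Ysig_def Ysig_second first_kind_def second_kind_def)
    ultimately show ?thesis
      by blast
  qed
qed

end
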